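(* Let $G$ be the full group of a Bratteli diagram $B$ whose path space $X$ is a Cantor set and such that $G$ acts minimally on $X$. If $G$ is a simple non-trivial group, then $B$ can be telescoped so that in the new diagram each pair of vertices from consecutive levels is connected by an even number (at least two) of edges.
   Context: A Bratteli diagram $B=(V,E)$: finite vertex sets $V_0=\{v_0\},V_1,\dots$, finite edge sets $E_1,E_2,\dots$, maps $s:E_i\to V_{i-1}$, $r:E_i\to V_i$ with $r(E_i)=V_i$, $s^{-1}(v)\ne\emptyset$ for all $v$, $r^{-1}(v)\ne\emptyset$ for $v\ne v_0$. Path space $X$: infinite paths $(e_1,e_2,\dots)$ from $v_0$, topologized by cylinder sets. $G_n$: homeomorphisms of $X$ that change only the first $n$ edges of each path, replacing $(e_1,\dots,e_n)$ by a path from $v_0$ ending at $r(e_n)$ (depending only on $(e_1,\dots,e_n)$); full group $G=\bigcup_nG_n$. A telescope of $B$ along $0=m_0<m_1<\cdots$ is the diagram $B'$ with $V'_n=V_{m_n}$ and $E'_n$ the set of finite paths of $B$ between levels $m_{n-1}$ and $m_n$ (it has the same path space and the same full group). *)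

theory Defs
  imports "HOL-Analysis.Analysis" "HOL-Algebra.Coset"
begin

text \<open>Bratteli diagram. Levels are indexed by nat: V n is the vertex set of level n,
  E n (n \<ge> 1) the edge set between levels n-1 and n, and s n, r n the source and
  range maps on E n.\<close>

definition bratteli ::
  "(nat \<Rightarrow> 'v set) \<Rightarrow> (nat \<Rightarrow> 'e set) \<Rightarrow> (nat \<Rightarrow> 'e \<Rightarrow> 'v) \<Rightarrow> (nat \<Rightarrow> 'e \<Rightarrow> 'v) \<Rightarrow> 'v \<Rightarrow> bool"
where
  "bratteli V E s r v0 \<longleftrightarrow>
     V 0 = {v0} \<and>
     (\<forall>n. finite (V n)) \<and> (\<forall>n. finite (E (Suc n))) \<and>
     (\<forall>n. \<forall>e\<in>E (Suc n). s (Suc n) e \<in> V n \<and> r (Suc n) e \<in> V (Suc n)) \<and>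
     (\<forall>n. r (Suc n) ` E (Suc n) = V (Suc n)) \<and>
     (\<forall>n. \<forall>v\<in>V n. \<exists>e\<in>E (Suc n). s (Suc n) e = v) \<and>
     (\<forall>n. \<forall>v\<in>V (Suc n). \<exists>e\<in>E (Suc n). r (Suc n) e = v)"

text \<open>Path space: an infinite path (e_1, e_2, ...) from v0 is represented by x with
  x k = e_(k+1).\<close>

definition pathspace ::
  "(nat \<Rightarrow> 'v set) \<Rightarrow> (nat \<Rightarrow> 'e set) \<Rightarrow> (nat \<Rightarrow> 'e \<Rightarrow> 'v) \<Rightarrow> (nat \<Rightarrow> 'e \<Rightarrow> 'v) \<Rightarrow> 'v \<Rightarrow> (nat \<Rightarrow> 'e) set"
where
  "pathspace V E s r v0 =
     {x. (\<forall>k. x k \<in> E (Suc k)) \<and> s 1 (x 0) = v0 \<and>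
         (\<forall>k. r (Suc k) (x k) = s (Suc (Suc k)) (x (Suc k)))}"

definition pathtop ::
  "(nat \<Rightarrow> 'v set) \<Rightarrow> (nat \<Rightarrow> 'e set) \<Rightarrow> (nat \<Rightarrow> 'e \<Rightarrow> 'v) \<Rightarrow> (nat \<Rightarrow> 'e \<Rightarrow> 'v) \<Rightarrow> 'v \<Rightarrow> (nat \<Rightarrow> 'e) topology"
where
  "pathtop V E s r v0 =
     subtopology (product_topology (\<lambda>k. discrete_topology (E (Suc k))) UNIV)
                 (pathspace V E s r v0)"

definition is_cantor_space :: "'a topology \<Rightarrow> bool" where
  "is_cantor_space T \<longleftrightarrow>
     T homeomorphic_space product_topology (\<lambda>_::nat. discrete_topology (UNIV :: bool set)) UNIV"

text \<open>G_n: homeomorphisms of X changing only the first n edges, the new first n edges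
  depending only on the old first n edges (maps are taken to be the identity off X).\<close>

definition Gn ::
  "(nat \<Rightarrow> 'v set) \<Rightarrow> (nat \<Rightarrow> 'e set) \<Rightarrow> (nat \<Rightarrow> 'e \<Rightarrow> 'v) \<Rightarrow> (nat \<Rightarrow> 'e \<Rightarrow> 'v) \<Rightarrow> 'v \<Rightarrow> nat
    \<Rightarrow> ((nat \<Rightarrow> 'e) \<Rightarrow> (nat \<Rightarrow> 'e)) set"
where
  "Gn V E s r v0 n =
     {g. homeomorphic_map (pathtop V E s r v0) (pathtop V E s r v0) g \<and>
         (\<forall>x. x \<notin> pathspace V E s r v0 \<longrightarrow> g x = x) \<and>
         (\<forall>x\<in>pathspace V E s r v0. \<forall>k\<ge>n. g x k = x k) \<and>
         (\<forall>x\<in>pathspace V E s r v0. \<forall>y\<in>pathspace V E s r v0.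
             (\<forall>k<n. x k = y k) \<longrightarrow> (\<forall>k<n. g x k = g y k))}"

definition fullgroup_set ::
  "(nat \<Rightarrow> 'v set) \<Rightarrow> (nat \<Rightarrow> 'e set) \<Rightarrow> (nat \<Rightarrow> 'e \<Rightarrow> 'v) \<Rightarrow> (nat \<Rightarrow> 'e \<Rightarrow> 'v) \<Rightarrow> 'v
    \<Rightarrow> ((nat \<Rightarrow> 'e) \<Rightarrow> (nat \<Rightarrow> 'e)) set"
where
  "fullgroup_set V E s r v0 = (\<Union>n. Gn V E s r v0 n)"

definition fullgroup ::
  "(nat \<Rightarrow> 'v set) \<Rightarrow> (nat \<Rightarrow> 'e set) \<Rightarrow> (nat \<Rightarrow> 'e \<Rightarrow> 'v) \<Rightarrow> (nat \<Rightarrow> 'e \<Rightarrow> 'v) \<Rightarrow> 'v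
    \<Rightarrow> ((nat \<Rightarrow> 'e) \<Rightarrow> (nat \<Rightarrow> 'e)) monoid"
where
  "fullgroup V E s r v0 = \<lparr>carrier = fullgroup_set V E s r v0, mult = (\<lambda>f g. f \<circ> g), one = id\<rparr>"

definition acts_minimally ::
  "(nat \<Rightarrow> 'v set) \<Rightarrow> (nat \<Rightarrow> 'e set) \<Rightarrow> (nat \<Rightarrow> 'e \<Rightarrow> 'v) \<Rightarrow> (nat \<Rightarrow> 'e \<Rightarrow> 'v) \<Rightarrow> 'v \<Rightarrow> bool"
where
  "acts_minimally V E s r v0 \<longleftrightarrow>
     (\<forall>x\<in>pathspace V E s r v0.
        pathtop V E s r v0 closure_of {g x | g. g \<in> fullgroup_set V E s r v0}
          = pathspace V E s r v0)"

text \<open>Simple non-trivial group (possibly infinite; the library locale simple_group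
  requires finite order > 1, so it is not used).\<close>

definition simple_nontrivial_group :: "('a, 'b) monoid_scheme \<Rightarrow> bool" where
  "simple_nontrivial_group G \<longleftrightarrow>
     group G \<and> carrier G \<noteq> {\<one>\<^bsub>G\<^esub>} \<and>
     (\<forall>H. H \<lhd> G \<longrightarrow> H = {\<one>\<^bsub>G\<^esub>} \<or> H = carrier G)"

text \<open>Finite paths of B from vertex v at level a to vertex w at level b (a < b);
  these are the edges of the telescoped diagram between the corresponding levels.\<close>

definition fin_paths ::
  "(nat \<Rightarrow> 'v set) \<Rightarrow> (nat \<Rightarrow> 'e set) \<Rightarrow> (nat \<Rightarrow> 'e \<Rightarrow> 'v) \<Rightarrow> (nat \<Rightarrow> 'e \<Rightarrow> 'v)
    \<Rightarrow> nat \<Rightarrow> nat \<Rightarrow> 'v \<Rightarrow> 'v \<Rightarrow> 'e list set"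
where
  "fin_paths V E s r a b v w =
     {es. length es = b - a \<and>
          (\<forall>i<b - a. es ! i \<in> E (a + i + 1)) \<and>
          (\<forall>i. Suc i < b - a \<longrightarrow> r (a + i + 1) (es ! i) = s (a + i + 2) (es ! Suc i)) \<and>
          s (a + 1) (es ! 0) = v \<and> r b (es ! (b - a - 1)) = w}"

end

theory Submission
  imports Defs "HOL-Combinatorics.Permutations"
begin

text \<open>
  An element of \<open>G\<^sub>n\<close> permutes, for every \<open>m \<ge> n\<close> and every vertex \<open>w\<close> of level \<open>m\<close>, the finite
  set of paths from the root to \<open>w\<close>. The elements all of whose permutations are eventually even
  form a normal subgroup containing every square. If it were trivial, the group would have
  exponent two, hence (being simple) order two, and orbits would be finite, which is impossible
  for a minimal action on a Cantor set. So every element is eventually even. A nontrivial element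
  provides two different paths from the root to a common vertex; by minimality both extend to any
  vertex \<open>u\<close> of a deep enough level \<open>d\<close>, and the involution exchanging the two resulting prefixes
  acts on the paths from the root to a vertex \<open>w\<close> below \<open>u\<close> as a product of as many transpositions
  as there are paths from \<open>u\<close> to \<open>w\<close>. Hence these numbers are eventually even. Minimality also
  connects every vertex of a level to every vertex of some deeper level, and telescoping along
  levels where both properties hold gives the theorem.
\<close>

lemma (in group) simple_of_exponent_two_carrier:
  assumes simple: "\<And>H. H \<lhd> G \<Longrightarrow> H = {\<one>} \<or> H = carrier G"
    and square_one: "\<And>a. a \<in> carrier G \<Longrightarrow> a \<otimes> a = \<one>"
    and g: "g \<in> carrier G" "g \<noteq> \<one>"
  shows "carrier G = {\<one>, g}"
proof -
  have inv_self: "inv a = a" if "a \<in> carrier G" for a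
    using inv_equality[OF square_one] that by blast
  have comm: "a \<otimes> b = b \<otimes> a" if "a \<in> carrier G" "b \<in> carrier G" for a b
    using that inv_self[of "a \<otimes> b"] inv_mult_group[of a b] by (simp add: inv_self)
  have "subgroup {\<one>, g} G"
    using g square_one inv_self by (intro subgroupI) auto
  moreover have "x \<otimes> h \<otimes> inv x \<in> {\<one>, g}" if "x \<in> carrier G" "h \<in> {\<one>, g}" for x h
    using that g comm[of x g] by (auto simp: m_assoc)
  ultimately have "{\<one>, g} \<lhd> G"
    by (simp add: normal_inv_iff)
  then show ?thesis
    using simple g(2) by blast
qed

lemma telescope_exists:
  assumes "\<And>a. eventually (P a) sequentially"
  shows "\<exists>m. m 0 = 0 \<and> strict_mono m \<and> (\<forall>n. P (m n) (m (Suc n)))"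
proof -
  have "\<exists>b>a. P a b" for a
    using eventually_happens'[OF _ eventually_conj[OF assms[of a] eventually_gt_at_top[of a]]] by auto
  then obtain f where f: "\<And>a. f a > a \<and> P a (f a)"
    by metis
  define m where "m n = (f ^^ n) 0" for n
  have "m (Suc n) = f (m n)" for n
    by (simp add: m_def)
  then show ?thesis
    using f by (intro exI[of _ m]) (auto simp: strict_mono_Suc_iff m_def)
qed

definition swap_prefixes :: "'a list \<Rightarrow> 'a list \<Rightarrow> 'a list set \<Rightarrow> 'a list \<Rightarrow> 'a list" where
  "swap_prefixes p1 p2 S q =
     (if \<exists>t\<in>S. q = p1 @ t then p2 @ drop (length p1) q
      else if \<exists>t\<in>S. q = p2 @ t then p1 @ drop (length p2) q else q)"

lemma swap_prefixes_empty: "swap_prefixes p1 p2 {} = id"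
  by (simp add: swap_prefixes_def fun_eq_iff)

lemma swap_prefixes_insert:
  assumes "length p1 = length p2" "p1 \<noteq> p2" "t \<notin> S"
  shows "swap_prefixes p1 p2 (insert t S) = Transposition.transpose (p1 @ t) (p2 @ t) \<circ> swap_prefixes p1 p2 S"
proof
  fix q
  have distinct: "p1 @ a \<noteq> p2 @ b" for a b
    using assms(1,2) by (metis append_eq_append_conv)
  show "swap_prefixes p1 p2 (insert t S) q = (Transposition.transpose (p1 @ t) (p2 @ t) \<circ> swap_prefixes p1 p2 S) q"
    using assms(3) distinct distinct[symmetric] by (auto simp: swap_prefixes_def Transposition.transpose_def)
qed

lemma evenperm_swap_prefixes:
  assumes "finite S" "length p1 = length p2" "p1 \<noteq> p2"
  shows "permutation (swap_prefixes p1 p2 S) \<and> (evenperm (swap_prefixes p1 p2 S) \<longleftrightarrow> even (card S))"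
  using assms(1)
proof (induction S rule: finite_induct)
  case empty
  then show ?case by (simp add: swap_prefixes_empty)
next
  case (insert t S)
  let ?\<tau> = "Transposition.transpose (p1 @ t) (p2 @ t)"
  have perm: "permutation (swap_prefixes p1 p2 S)"
    using insert.IH by blast
  have "permutation (?\<tau> \<circ> swap_prefixes p1 p2 S)"
    by (rule permutation_compose[OF permutation_swap_id perm])
  moreover have "evenperm (?\<tau> \<circ> swap_prefixes p1 p2 S) \<longleftrightarrow> \<not> evenperm (swap_prefixes p1 p2 S)"
    using evenperm_comp[OF permutation_swap_id perm] assms(3) by (simp add: evenperm_swap)
  moreover have "even (card (insert t S)) \<longleftrightarrow> odd (card S)"
    using insert.hyps by simp
  ultimately show ?case
    unfolding swap_prefixes_insert[OF assms(2,3) insert.hyps(2)] using insert.IH by argo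
qed

locale bratteli_diagram =
  fixes V :: "nat \<Rightarrow> 'v set" and E :: "nat \<Rightarrow> 'e set"
    and s r :: "nat \<Rightarrow> 'e \<Rightarrow> 'v" and v0 :: 'v
  assumes bratteli: "bratteli V E s r v0"
begin

abbreviation "X \<equiv> pathspace V E s r v0"
abbreviation "paths \<equiv> fin_paths V E s r"

lemma V_0: "V 0 = {v0}"
  using bratteli by (simp add: bratteli_def)

lemma finite_V: "finite (V n)"
  using bratteli by (simp add: bratteli_def)

lemma finite_E: "finite (E (Suc n))"
  using bratteli by (simp add: bratteli_def)

lemma source_in_V: "e \<in> E (Suc n) \<Longrightarrow> s (Suc n) e \<in> V n"
  using bratteli by (simp add: bratteli_def)

lemma range_in_V: "e \<in> E (Suc n) \<Longrightarrow> r (Suc n) e \<in> V (Suc n)"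
  using bratteli by (simp add: bratteli_def)

lemma exists_edge_from: "v \<in> V n \<Longrightarrow> \<exists>e\<in>E (Suc n). s (Suc n) e = v"
  using bratteli by (simp add: bratteli_def)

lemma exists_edge_to: "v \<in> V (Suc n) \<Longrightarrow> \<exists>e\<in>E (Suc n). r (Suc n) e = v"
  using bratteli by (simp add: bratteli_def)

lemma V_nonempty: "V n \<noteq> {}"
proof (induction n)
  case 0
  then show ?case by (simp add: V_0)
next
  case (Suc n)
  then obtain e where "e \<in> E (Suc n)"
    using exists_edge_from by blast
  then show ?case
    using range_in_V by blast
qed

section \<open>Finite paths\<close>

lemma length_paths: "q \<in> paths a b v w \<Longrightarrow> length q = b - a"
  unfolding fin_paths_def by auto

lemma paths_target_unique: "q \<in> paths a b v w \<Longrightarrow> q \<in> paths a b v w' \<Longrightarrow> w = w'"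
  unfolding fin_paths_def by auto

lemma paths_target_in_V:
  assumes q: "q \<in> paths a b v w" and ab: "a < b"
  shows "w \<in> V b"
proof -
  have "\<forall>i<b - a. q ! i \<in> E (Suc (a + i))"
    using q by (simp add: fin_paths_def)
  then have "q ! (b - a - 1) \<in> E (Suc (a + (b - a - 1)))"
    using ab by (meson diff_less zero_less_diff zero_less_one)
  moreover have "Suc (a + (b - a - 1)) = b" "r b (q ! (b - a - 1)) = w"
    using q ab by (auto simp: fin_paths_def)
  ultimately show ?thesis
    using range_in_V by metis
qed

lemma finite_paths: "finite (paths a b v w)"
proof -
  let ?F = "\<Union>i\<in>{a+1..b}. E i"
  have "paths a b v w \<subseteq> {q. set q \<subseteq> ?F \<and> length q = b - a}"
    by (fastforce simp: fin_paths_def in_set_conv_nth intro!: bexI[of _ "Suc (a + _)"])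
  moreover have "finite ?F"
    using finite_E by (intro finite_UN_I) (auto dest!: Suc_le_D)
  ultimately show ?thesis
    using finite_subset finite_lists_length_eq by blast
qed

lemma paths_one_step_iff:
  "paths c (Suc c) u w \<noteq> {} \<longleftrightarrow> (\<exists>e\<in>E (Suc c). s (Suc c) e = u \<and> r (Suc c) e = w)"
proof
  assume "paths c (Suc c) u w \<noteq> {}"
  then obtain q where "q \<in> paths c (Suc c) u w"
    by auto
  then show "\<exists>e\<in>E (Suc c). s (Suc c) e = u \<and> r (Suc c) e = w"
    unfolding fin_paths_def by (intro bexI[of _ "q ! 0"]) auto
next
  assume "\<exists>e\<in>E (Suc c). s (Suc c) e = u \<and> r (Suc c) e = w"
  then obtain e where "[e] \<in> paths c (Suc c) u w"
    unfolding fin_paths_def by auto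
  then show "paths c (Suc c) u w \<noteq> {}"
    by auto
qed

lemma paths_append:
  assumes ab: "a < b" and bc: "b < c" and p: "p \<in> paths a b v u" and q: "q \<in> paths b c u w"
  shows "p @ q \<in> paths a c v w"
proof -
  have len: "length p = b - a" "length q = c - b"
    using p q by (simp_all add: length_paths)
  have shift: "\<exists>j. i = (b - a) + j \<and> j < c - b" if "\<not> i < b - a" "i < c - a" for i
    using that ab bc by (intro exI[of _ "i - (b - a)"]) auto
  have edge: "(p @ q) ! i \<in> E (Suc (a + i))" if i: "i < c - a" for i
  proof (cases "i < b - a")
    case True
    then show ?thesis using p len by (simp add: nth_append fin_paths_def)
  next
    case False
    then obtain j where "i = (b - a) + j" "j < c - b"
      using shift i by blast
    moreover from this have "(p @ q) ! i = q ! j" "a + i = b + j"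
      using len ab by (auto simp: nth_append)
    ultimately show ?thesis using q by (simp add: fin_paths_def)
  qed
  have chain: "r (Suc (a + i)) ((p @ q) ! i) = s (Suc (Suc (a + i))) ((p @ q) ! Suc i)"
    if i: "Suc i < c - a" for i
  proof (cases "Suc i < b - a")
    case True
    then show ?thesis using p len by (simp add: nth_append fin_paths_def)
  next
    case False
    then obtain j where j: "Suc i = (b - a) + j" "j < c - b"
      using shift i by blast
    show ?thesis
    proof (cases j)
      case 0
      then have "i = b - Suc a" "Suc (a + i) = b"
        using j by auto
      then show ?thesis using p q j len 0 by (auto simp: nth_append fin_paths_def)
    next
      case (Suc j')
      then show ?thesis using q j len ab by (auto simp: nth_append fin_paths_def)
    qed
  qed
  show ?thesis
    using edge chain p q len ab bc by (auto simp: nth_append fin_paths_def)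
qed

lemma paths_split:
  assumes "a < b" "b < c" "q \<in> paths a c v w"
  defines "u \<equiv> r b (q ! (b - a - 1))"
  shows "u \<in> V b" "take (b - a) q \<in> paths a b v u" "drop (b - a) q \<in> paths b c u w"
proof -
  have len: "length q = c - a" and edge: "\<forall>i<c - a. q ! i \<in> E (a + i + 1)"
    and chain: "\<forall>i. Suc i < c - a \<longrightarrow> r (a + i + 1) (q ! i) = s (a + i + 2) (q ! Suc i)"
    and ends: "s (a + 1) (q ! 0) = v" "r c (q ! (c - a - 1)) = w"
    using assms unfolding fin_paths_def by auto
  have "q ! (b - a - 1) \<in> E (Suc (b - 1))"
    using edge[rule_format, of "b - a - 1"] assms(1,2) by (simp add: Suc_diff_Suc)
  then show "u \<in> V b"
    using range_in_V assms(1) by (fastforce simp: u_def)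
  show "take (b - a) q \<in> paths a b v u"
    unfolding fin_paths_def u_def using len edge chain ends assms(1,2) by auto
  have "s (b + 1) (q ! (b - a)) = u"
    using chain[rule_format, of "b - a - 1"] assms(1,2) by (simp add: u_def Suc_diff_Suc)
  moreover have "b - a + (c - b - 1) = c - a - 1"
    using assms(1,2) by simp
  ultimately show "drop (b - a) q \<in> paths b c u w"
    unfolding fin_paths_def
  proof (intro CollectI conjI allI impI)
    fix i
    assume "i < c - b"
    then show "drop (b - a) q ! i \<in> E (b + i + 1)"
      using edge[rule_format, of "b - a + i"] assms(1,2) len by (simp add: add.commute)
  next
    fix i
    assume "Suc i < c - b"
    then show "r (b + i + 1) (drop (b - a) q ! i) = s (b + i + 2) (drop (b - a) q ! Suc i)"
      using chain[rule_format, of "b - a + i"] assms(1,2) len by (simp add: add.commute)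
  qed (use len ends assms(1,2) in auto)
qed

lemma paths_concat_eq:
  assumes "a < b" "b < c"
  shows "paths a c v w = (\<lambda>(u, p, q). p @ q) ` (SIGMA u:V b. paths a b v u \<times> paths b c u w)"
proof (intro equalityI subsetI)
  fix q
  assume q: "q \<in> paths a c v w"
  let ?u = "r b (q ! (b - a - 1))"
  have "(?u, take (b - a) q, drop (b - a) q) \<in> (SIGMA u:V b. paths a b v u \<times> paths b c u w)"
    using paths_split[OF assms q] by auto
  then show "q \<in> (\<lambda>(u, p, q). p @ q) ` (SIGMA u:V b. paths a b v u \<times> paths b c u w)"
    by (rule rev_image_eqI) simp
qed (use paths_append[OF assms] in auto)

lemma card_paths_via_level:
  assumes "a < b" "b < c"
  shows "card (paths a c v w) = (\<Sum>u\<in>V b. card (paths a b v u) * card (paths b c u w))"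
proof -
  have "inj_on (\<lambda>(u, p, q). p @ q) (SIGMA u:V b. paths a b v u \<times> paths b c u w)"
  proof (rule inj_onI, clarsimp)
    fix u p q u' p' q'
    assume p: "p \<in> paths a b v u" and p': "p' \<in> paths a b v u'"
      and "p @ q = p' @ q'"
    moreover have "length p = length p'"
      using p p' by (simp add: length_paths)
    ultimately show "u = u' \<and> p = p' \<and> q = q'"
      using paths_target_unique by auto
  qed
  then have "card (paths a c v w) = card (SIGMA u:V b. paths a b v u \<times> paths b c u w)"
    unfolding paths_concat_eq[OF assms] by (rule card_image)
  also have "\<dots> = (\<Sum>u\<in>V b. card (paths a b v u) * card (paths b c u w))"
    using finite_V finite_paths by (simp add: card_SigmaI card_cartesian_product)
  finally show ?thesis .
qed

lemma paths_trans:
  "a < b \<Longrightarrow> b < c \<Longrightarrow> paths a b v u \<noteq> {} \<Longrightarrow> paths b c u w \<noteq> {} \<Longrightarrow> paths a c v w \<noteq> {}"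
  using paths_append by blast

lemma paths_through_level:
  assumes "a < b" "b < c" "paths a c v w \<noteq> {}"
  shows "\<exists>u\<in>V b. paths a b v u \<noteq> {} \<and> paths b c u w \<noteq> {}"
proof -
  obtain q where "q \<in> paths a c v w"
    using assms(3) by blast
  from paths_split[OF assms(1,2) this] show ?thesis
    by blast
qed

lemma exists_path_to:
  assumes "w \<in> V b" "a < b"
  shows "\<exists>u\<in>V a. paths a b u w \<noteq> {}"
  using assms
proof (induction b arbitrary: w)
  case 0
  then show ?case by simp
next
  case (Suc b)
  then obtain e where e: "e \<in> E (Suc b)" "r (Suc b) e = w"
    using exists_edge_to by blast
  then have u: "s (Suc b) e \<in> V b" "paths b (Suc b) (s (Suc b) e) w \<noteq> {}"
    using source_in_V paths_one_step_iff by blast+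
  show ?case
  proof (cases "a = b")
    case True
    then show ?thesis using u by blast
  next
    case False
    then obtain u' where "u' \<in> V a" "paths a b u' (s (Suc b) e) \<noteq> {}"
      using Suc u by (metis less_SucE)
    then show ?thesis
      using paths_trans[OF _ lessI _ u(2)] False Suc.prems(2) by (metis less_SucE)
  qed
qed

lemma paths_from_root: "w \<in> V b \<Longrightarrow> 0 < b \<Longrightarrow> paths 0 b v0 w \<noteq> {}"
  using exists_path_to[of w b 0] V_0 by auto

lemma paths_to_all_propagate:
  assumes "\<forall>w\<in>V b. paths a b v w \<noteq> {}" "a < b" "b < b'"
  shows "\<forall>w\<in>V b'. paths a b' v w \<noteq> {}"
proof
  fix w
  assume "w \<in> V b'"
  then obtain u where "u \<in> V b" "paths b b' u w \<noteq> {}"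
    using exists_path_to assms(3) by blast
  then show "paths a b' v w \<noteq> {}"
    using assms paths_trans by blast
qed

lemma even_paths_restrict:
  assumes "\<forall>u\<in>V b. \<forall>w\<in>V c. even (card (paths b c u w))" "a < b" "b < c"
  shows "\<forall>v\<in>V a. \<forall>w\<in>V c. even (card (paths a c v w))"
  using assms by (auto simp: card_paths_via_level intro!: dvd_sum)

section \<open>The path space\<close>

definition segment :: "nat \<Rightarrow> nat \<Rightarrow> (nat \<Rightarrow> 'e) \<Rightarrow> 'e list" where
  "segment a b x = map (\<lambda>i. x (a + i)) [0..<b - a]"

definition vertex :: "nat \<Rightarrow> (nat \<Rightarrow> 'e) \<Rightarrow> 'v" where
  "vertex k x = s (Suc k) (x k)"

definition tail_from :: "nat \<Rightarrow> 'v \<Rightarrow> (nat \<Rightarrow> 'e) \<Rightarrow> bool" where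
  "tail_from d u y \<longleftrightarrow> s (Suc d) (y d) = u \<and>
     (\<forall>k\<ge>d. y k \<in> E (Suc k) \<and> r (Suc k) (y k) = s (Suc (Suc k)) (y (Suc k)))"

definition graft :: "nat \<Rightarrow> 'e list \<Rightarrow> (nat \<Rightarrow> 'e) \<Rightarrow> nat \<Rightarrow> 'e" where
  "graft d p y = (\<lambda>k. if k < d then p ! k else y k)"

lemma pathspace_iff_tail_from: "x \<in> X \<longleftrightarrow> tail_from 0 v0 x"
  by (auto simp: pathspace_def tail_from_def)

lemma tail_from_vertex: "x \<in> X \<Longrightarrow> tail_from d (vertex d x) x"
  by (simp add: pathspace_def tail_from_def vertex_def)

lemma pathspace_edge: "x \<in> X \<Longrightarrow> x k \<in> E (Suc k)"
  by (simp add: pathspace_def)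

lemma vertex_0: "x \<in> X \<Longrightarrow> vertex 0 x = v0"
  by (simp add: pathspace_def vertex_def)

lemma range_vertex: "x \<in> X \<Longrightarrow> r (Suc k) (x k) = vertex (Suc k) x"
  by (simp add: pathspace_def vertex_def)

lemma segment_eq_iff: "segment a b x = segment a b y \<longleftrightarrow> (\<forall>i. a \<le> i \<and> i < b \<longrightarrow> x i = y i)"
proof
  assume "segment a b x = segment a b y"
  then have "\<forall>j<b - a. x (a + j) = y (a + j)"
    by (simp add: segment_def map_eq_conv)
  then show "\<forall>i. a \<le> i \<and> i < b \<longrightarrow> x i = y i"
    by (metis add_diff_inverse_nat diff_less_mono not_less)
qed (auto simp: segment_def)

lemma segment_in_paths:
  assumes "x \<in> X" "a < b"
  shows "segment a b x \<in> paths a b (vertex a x) (vertex b x)"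
proof -
  have "r b (x (b - 1)) = vertex b x"
    using range_vertex[OF assms(1), of "b - 1"] assms(2) by simp
  then show ?thesis
    using assms pathspace_edge range_vertex
    by (auto simp: fin_paths_def segment_def vertex_def ac_simps)
qed

lemma segment_take: "d \<le> m \<Longrightarrow> segment 0 d x = take d (segment 0 m x)"
  by (simp add: segment_def take_map)

lemma exists_tail_with:
  assumes start: "Q c u"
    and step: "\<And>c u. Q c u \<Longrightarrow> \<exists>e\<in>E (Suc c). s (Suc c) e = u \<and> Q (Suc c) (r (Suc c) e)"
  shows "\<exists>y. tail_from c u y \<and> (\<forall>k\<ge>c. Q (Suc k) (r (Suc k) (y k)))"
proof -
  define next_edge where
    "next_edge l w = (SOME e. e \<in> E (Suc l) \<and> s (Suc l) e = w \<and> Q (Suc l) (r (Suc l) e))" for l w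
  have next_edge: "next_edge l w \<in> E (Suc l) \<and> s (Suc l) (next_edge l w) = w
      \<and> Q (Suc l) (r (Suc l) (next_edge l w))" if "Q l w" for l w
    unfolding next_edge_def using step[OF that] by (rule someI2_bex) auto
  define w where "w = rec_nat u (\<lambda>j w. r (Suc (c + j)) (next_edge (c + j) w))"
  have w: "w 0 = u" "w (Suc j) = r (Suc (c + j)) (next_edge (c + j) (w j))" for j
    by (simp_all add: w_def)
  have Q_w: "Q (c + j) (w j)" for j
    by (induction j) (use start next_edge in \<open>auto simp: w\<close>)
  define y where "y k = next_edge k (w (k - c))" for k
  have "y k \<in> E (Suc k) \<and> Q (Suc k) (r (Suc k) (y k)) \<and> r (Suc k) (y k) = s (Suc (Suc k)) (y (Suc k))"
    if "c \<le> k" for k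
  proof -
    have "Suc k - c = Suc (k - c)"
      using that by simp
    then show ?thesis
      using next_edge[OF Q_w[of "k - c"]] next_edge[OF Q_w[of "Suc (k - c)"]] that
      by (simp add: y_def w)
  qed
  moreover have "s (Suc c) (y c) = u"
    using next_edge[OF Q_w[of 0]] by (simp add: y_def w)
  ultimately show ?thesis
    unfolding tail_from_def by blast
qed

lemma graft_in_pathspace:
  assumes d: "0 < d" and p: "p \<in> paths 0 d v0 u" and y: "tail_from d u y"
  shows "graft d p y \<in> X"
  unfolding pathspace_def
proof (intro CollectI conjI allI)
  fix k
  show "graft d p y k \<in> E (Suc k)"
    using p y by (auto simp: graft_def fin_paths_def tail_from_def)
  consider "Suc k < d" | "Suc k = d" | "d \<le> k"
    by linarith
  then show "r (Suc k) (graft d p y k) = s (Suc (Suc k)) (graft d p y (Suc k))"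
  proof cases
    case 3
    then show ?thesis using y by (simp add: graft_def tail_from_def)
  qed (use p y in \<open>auto simp: graft_def fin_paths_def tail_from_def\<close>)
qed (use d p in \<open>simp add: graft_def fin_paths_def\<close>)

lemma graft_beyond: "d \<le> k \<Longrightarrow> graft d p y k = y k"
  by (simp add: graft_def)

lemma vertex_graft: "d \<le> k \<Longrightarrow> vertex k (graft d p y) = vertex k y"
  by (simp add: vertex_def graft_def)

lemma segment_graft: "length p = d \<Longrightarrow> d \<le> m \<Longrightarrow> segment 0 m (graft d p x) = p @ drop d (segment 0 m x)"
  unfolding segment_def graft_def by (rule nth_equalityI) (auto simp: nth_append)

lemma segment_graft_prefix: "length p = d \<Longrightarrow> segment 0 d (graft d p x) = p"
  using segment_graft[of p d d x] by (simp add: segment_def)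

lemma graft_graft: "graft d p (graft d p' x) = graft d p x"
  by (auto simp: graft_def)

lemma graft_segment: "graft d (segment 0 d x) x = x"
  by (auto simp: graft_def segment_def)

lemma exists_path_through:
  assumes "u \<in> V d"
  shows "\<exists>x\<in>X. vertex d x = u"
proof -
  obtain y where y: "tail_from d u y"
    using exists_tail_with[of "\<lambda>c u. u \<in> V c"] assms exists_edge_from range_in_V by blast
  show ?thesis
  proof (cases "d = 0")
    case True
    then show ?thesis
      using y assms V_0 by (auto simp: pathspace_iff_tail_from vertex_def tail_from_def)
  next
    case False
    then obtain p where "p \<in> paths 0 d v0 u"
      using paths_from_root assms by blast
    then have "graft d p y \<in> X"
      using graft_in_pathspace y False by blast
    moreover have "vertex d (graft d p y) = u"
      using y vertex_graft[of d d p y] by (simp add: vertex_def tail_from_def)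
    ultimately show ?thesis by blast
  qed
qed

section \<open>The cylinder topology and the groups \<open>G\<^sub>n\<close>\<close>

abbreviation "T \<equiv> pathtop V E s r v0"
abbreviation "G \<equiv> Gn V E s r v0"
abbreviation "FG \<equiv> fullgroup V E s r v0"

lemma topspace_pathtop: "topspace T = X"
  using pathspace_edge by (auto simp: pathtop_def PiE_iff)

lemma openin_coordinate: "openin T {x\<in>X. x k \<in> A}"
proof -
  let ?P = "product_topology (\<lambda>k. discrete_topology (E (Suc k))) UNIV"
  have "openin ?P {x \<in> topspace ?P. x k \<in> A \<inter> E (Suc k)}"
    by (rule openin_continuous_map_preimage[OF continuous_map_product_projection]) auto
  moreover have "{x \<in> topspace ?P. x k \<in> A \<inter> E (Suc k)} \<inter> X = {x\<in>X. x k \<in> A}"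
    using pathspace_edge by (auto simp: PiE_iff)
  ultimately show ?thesis
    unfolding pathtop_def openin_subtopology by blast
qed

lemma openin_cylinder: "openin T {y\<in>X. \<forall>j<n. y j = x j}"
proof (induction n)
  case 0
  then show ?case
    using openin_coordinate[of 0 UNIV] by simp
next
  case (Suc n)
  have "{y\<in>X. \<forall>j<Suc n. y j = x j} = {y\<in>X. \<forall>j<n. y j = x j} \<inter> {y\<in>X. y n \<in> {x n}}"
    by (auto simp: less_Suc_eq)
  then show ?case
    using Suc openin_coordinate by (simp only: openin_Int)
qed

lemma continuous_map_if_locally_determined:
  assumes into: "\<And>x. x \<in> X \<Longrightarrow> f x \<in> X"
    and local: "\<And>k. \<exists>n. \<forall>x\<in>X. \<forall>y\<in>X. (\<forall>j<n. x j = y j) \<longrightarrow> f x k = f y k"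
  shows "continuous_map T T f"
proof -
  have "continuous_map T (discrete_topology (E (Suc k))) (\<lambda>x. f x k)" for k
  proof -
    obtain n where n: "\<forall>x\<in>X. \<forall>y\<in>X. (\<forall>j<n. x j = y j) \<longrightarrow> f x k = f y k"
      using local by blast
    have "openin T {x \<in> X. f x k \<in> U}" for U
    proof (rule openin_subopen[THEN iffD2], intro ballI)
      fix x
      assume x: "x \<in> {x \<in> X. f x k \<in> U}"
      show "\<exists>C. openin T C \<and> x \<in> C \<and> C \<subseteq> {x \<in> X. f x k \<in> U}"
      proof (intro exI conjI)
        show "openin T {y\<in>X. \<forall>j<n. y j = x j}"
          by (rule openin_cylinder)
        show "{y\<in>X. \<forall>j<n. y j = x j} \<subseteq> {x \<in> X. f x k \<in> U}"
          using n x by fastforce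
      qed (use x in simp)
    qed
    moreover have "(\<lambda>x. f x k) ` X \<subseteq> E (Suc k)"
      using into pathspace_edge by blast
    ultimately show ?thesis
      unfolding continuous_map topspace_pathtop by auto
  qed
  then have "continuous_map T (product_topology (\<lambda>k. discrete_topology (E (Suc k))) UNIV) f"
    by (simp add: continuous_map_componentwise_UNIV)
  moreover have "f ` topspace T \<subseteq> X"
    using into topspace_pathtop by auto
  ultimately have "continuous_map T (subtopology (product_topology (\<lambda>k. discrete_topology (E (Suc k))) UNIV) X) f"
    using continuous_map_in_subtopology by blast
  then show ?thesis
    unfolding pathtop_def .
qed

lemma Hausdorff_pathtop: "Hausdorff_space T"
  unfolding pathtop_def
  by (intro Hausdorff_space_subtopology) (simp add: Hausdorff_space_product_topology)

lemma infinite_pathspace_if_cantor: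
  assumes "is_cantor_space T"
  shows "infinite X"
proof
  assume "finite X"
  obtain f where "homeomorphic_map T (product_topology (\<lambda>_::nat. discrete_topology (UNIV :: bool set)) UNIV) f"
    using assms unfolding is_cantor_space_def homeomorphic_space by blast
  then have "f ` X = UNIV"
    using homeomorphic_imp_surjective_map topspace_pathtop by fastforce
  with \<open>finite X\<close> have "finite (UNIV :: (nat \<Rightarrow> bool) set)"
    by (metis finite_imageI)
  then show False
    by (simp add: finite_UNIV_fun)
qed

lemma homeomorphic_map_Gn: "g \<in> G n \<Longrightarrow> homeomorphic_map T T g"
  by (simp add: Gn_def)

lemma Gn_maps_pathspace: "g \<in> G n \<Longrightarrow> x \<in> X \<Longrightarrow> g x \<in> X"
  using homeomorphic_imp_surjective_map[OF homeomorphic_map_Gn] topspace_pathtop by blast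

lemma Gn_inj_on: "g \<in> G n \<Longrightarrow> inj_on g X"
  using homeomorphic_imp_injective_map[OF homeomorphic_map_Gn] topspace_pathtop by simp

lemma Gn_outside: "g \<in> G n \<Longrightarrow> x \<notin> X \<Longrightarrow> g x = x"
  unfolding Gn_def by blast

lemma Gn_beyond: "g \<in> G n \<Longrightarrow> x \<in> X \<Longrightarrow> n \<le> k \<Longrightarrow> g x k = x k"
  unfolding Gn_def by blast

lemma Gn_local: "g \<in> G n \<Longrightarrow> x \<in> X \<Longrightarrow> y \<in> X \<Longrightarrow> \<forall>j<n. x j = y j \<Longrightarrow> k < n \<Longrightarrow> g x k = g y k"
  unfolding Gn_def by blast

lemma Gn_mono:
  assumes g: "g \<in> G n" and "n \<le> m"
  shows "g \<in> G m"
proof -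
  have "g x k = g y k" if "x \<in> X" "y \<in> X" "\<forall>j<m. x j = y j" "k < m" for x y k
    using that assms Gn_local[OF g, of x y k] Gn_beyond[OF g] by (cases "k < n") auto
  moreover have "g x k = x k" if "x \<in> X" "m \<le> k" for x k
    using that assms Gn_beyond by simp
  ultimately show ?thesis
    using homeomorphic_map_Gn[OF g] Gn_outside[OF g] unfolding Gn_def by blast
qed

lemma segment_Gn:
  "g \<in> G m \<Longrightarrow> x \<in> X \<Longrightarrow> y \<in> X \<Longrightarrow> segment 0 m x = segment 0 m y \<Longrightarrow> segment 0 m (g x) = segment 0 m (g y)"
  using Gn_local[of g m x y] by (auto simp: segment_eq_iff)

lemma vertex_Gn: "g \<in> G n \<Longrightarrow> x \<in> X \<Longrightarrow> n \<le> k \<Longrightarrow> vertex k (g x) = vertex k x"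
  by (simp add: vertex_def Gn_beyond)

lemma involution_in_Gn:
  assumes into: "\<And>x. x \<in> X \<Longrightarrow> f x \<in> X" and invol: "\<And>x. f (f x) = x"
    and outside: "\<And>x. x \<notin> X \<Longrightarrow> f x = x"
    and beyond: "\<And>x k. x \<in> X \<Longrightarrow> n \<le> k \<Longrightarrow> f x k = x k"
    and local: "\<And>x y k. x \<in> X \<Longrightarrow> y \<in> X \<Longrightarrow> \<forall>j<n. x j = y j \<Longrightarrow> k < n \<Longrightarrow> f x k = f y k"
  shows "f \<in> G n"
proof -
  have "f x k = f y k" if "x \<in> X" "y \<in> X" "\<forall>j<n + Suc k. x j = y j" for x y k
  proof (cases "k < n")
    case True
    then show ?thesis using local[of x y k] that by simp
  next
    case False
    then show ?thesis using beyond that by simp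
  qed
  then have "continuous_map T T f"
    using into by (intro continuous_map_if_locally_determined) blast+
  then have "homeomorphic_maps T T f f"
    using invol by (simp add: homeomorphic_maps_def)
  then have "homeomorphic_map T T f"
    using homeomorphic_map_maps by blast
  then show ?thesis
    unfolding Gn_def using outside beyond local by blast
qed

lemma carrier_fullgroup: "carrier FG = (\<Union>n. G n)"
  by (simp add: fullgroup_def fullgroup_set_def)

lemma mult_fullgroup: "f \<otimes>\<^bsub>FG\<^esub> g = f \<circ> g"
  by (simp add: fullgroup_def)

lemma one_fullgroup: "\<one>\<^bsub>FG\<^esub> = id"
  by (simp add: fullgroup_def)

lemma eventually_in_Gn:
  assumes "g \<in> carrier FG"
  shows "eventually (\<lambda>m. g \<in> G m) sequentially"
proof -
  obtain n where "g \<in> G n"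
    using assms by (auto simp: carrier_fullgroup)
  then show ?thesis
    using Gn_mono eventually_sequentially by blast
qed

lemma finite_pathspace_if_minimal_finite_group:
  assumes "acts_minimally V E s r v0" "finite (fullgroup_set V E s r v0)"
  shows "finite X"
proof -
  obtain x where x: "x \<in> X"
    using exists_path_through[of v0 0] V_0 by blast
  let ?orbit = "{g x | g. g \<in> fullgroup_set V E s r v0}"
  have "finite ?orbit"
    using assms(2) by (simp add: setcompr_eq_image)
  moreover have "?orbit \<subseteq> X"
    using x Gn_maps_pathspace by (auto simp: fullgroup_set_def)
  moreover have "t1_space T"
    using Hausdorff_pathtop by (rule Hausdorff_imp_t1_space)
  ultimately have "T closure_of ?orbit = ?orbit"
    using topspace_pathtop by (simp add: closure_of_closedin t1_space_closedin_finite)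
  moreover have "T closure_of ?orbit = X"
    using assms(1) x unfolding acts_minimally_def by blast
  ultimately show ?thesis
    using \<open>finite ?orbit\<close> by simp
qed

section \<open>Minimality and connectivity\<close>

text \<open>
  Koenig's lemma: if every level meets \<open>U\<close> and \<open>U\<close> is closed under passing to predecessors, some
  infinite path runs inside \<open>U\<close>. It is built edge by edge through vertices that still have
  descendants in \<open>U\<close> at every deeper level; since a vertex has only finitely many outgoing edges,
  one of them leads to such a vertex again.
\<close>

context
  fixes U :: "nat \<Rightarrow> 'v set"
  assumes closed: "\<And>c d u w. c < d \<Longrightarrow> u \<in> V c \<Longrightarrow> w \<in> U d \<Longrightarrow> paths c d u w \<noteq> {} \<Longrightarrow> u \<in> U c"
begin

definition descends_into :: "nat \<Rightarrow> 'v \<Rightarrow> bool" where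
  "descends_into c u \<longleftrightarrow> u \<in> U c \<inter> V c \<and> (\<forall>d>c. \<exists>w\<in>U d \<inter> V d. paths c d u w \<noteq> {})"

lemma not_descends_into_bound:
  assumes "u \<in> V c" "\<not> descends_into c u"
  shows "\<exists>d>c. \<forall>w\<in>U d \<inter> V d. paths c d u w = {}"
proof (cases "u \<in> U c")
  case True
  then show ?thesis
    using assms by (auto simp: descends_into_def)
next
  case False
  then have "paths c (Suc c) u w = {}" if "w \<in> U (Suc c)" for w
    using closed[OF lessI assms(1) that] by blast
  then show ?thesis
    by blast
qed

lemma descends_into_step:
  assumes u: "descends_into c u"
  shows "\<exists>e\<in>E (Suc c). s (Suc c) e = u \<and> descends_into (Suc c) (r (Suc c) e)"
proof (rule ccontr)
  assume none: "\<not> ?thesis"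
  define Out where "Out = {e\<in>E (Suc c). s (Suc c) e = u}"
  have "\<forall>e\<in>Out. \<exists>d. Suc c < d \<and> (\<forall>w\<in>U d \<inter> V d. paths (Suc c) d (r (Suc c) e) w = {})"
    using not_descends_into_bound none range_in_V by (auto simp: Out_def)
  from bchoice[OF this] obtain d
    where d: "\<forall>e\<in>Out. Suc c < d e \<and> (\<forall>w\<in>U (d e) \<inter> V (d e). paths (Suc c) (d e) (r (Suc c) e) w = {})"
    by blast
  define D where "D = Suc (Max (insert (Suc c) (d ` Out)))"
  have "finite (insert (Suc c) (d ` Out))"
    using finite_E by (simp add: Out_def)
  then have D: "Suc c < D" "\<And>e. e \<in> Out \<Longrightarrow> d e < D"
    unfolding D_def by (simp_all add: less_Suc_eq_le)
  obtain w where w: "w \<in> U D \<inter> V D" "paths c D u w \<noteq> {}"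
    using u Suc_lessD[OF D(1)] unfolding descends_into_def by blast
  then obtain u1 where "u1 \<in> V (Suc c)" "paths c (Suc c) u u1 \<noteq> {}" and u1: "paths (Suc c) D u1 w \<noteq> {}"
    using paths_through_level[OF lessI D(1)] by blast
  then obtain e where e: "e \<in> Out" "r (Suc c) e = u1"
    using paths_one_step_iff by (auto simp: Out_def)
  obtain w' where "w' \<in> V (d e)" "paths (Suc c) (d e) u1 w' \<noteq> {}" "paths (d e) D w' w \<noteq> {}"
    using paths_through_level[OF _ D(2) u1] d e by blast
  moreover from this have "w' \<in> U (d e)"
    using closed[OF D(2)[OF e(1)]] w(1) by blast
  ultimately show False
    using d e by blast
qed

lemma exists_path_within:
  assumes nonempty: "\<And>d. U d \<inter> V d \<noteq> {}"
  shows "\<exists>x\<in>X. \<forall>d. vertex d x \<in> U d"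
proof -
  have "descends_into 0 v0"
    unfolding descends_into_def
  proof (intro conjI allI impI)
    show "v0 \<in> U 0 \<inter> V 0"
      using nonempty[of 0] V_0 by auto
    fix d :: nat
    assume "0 < d"
    obtain w where "w \<in> U d \<inter> V d"
      using nonempty by blast
    then show "\<exists>w\<in>U d \<inter> V d. paths 0 d v0 w \<noteq> {}"
      using paths_from_root \<open>0 < d\<close> by blast
  qed
  then obtain y where y: "tail_from 0 v0 y" "\<forall>k. descends_into (Suc k) (r (Suc k) (y k))"
    using exists_tail_with[of descends_into 0 v0] descends_into_step by blast
  then have "y \<in> X"
    by (simp add: pathspace_iff_tail_from)
  moreover have "vertex d y \<in> U d" for d
    using y \<open>descends_into 0 v0\<close> \<open>y \<in> X\<close> vertex_0 range_vertex
    by (cases d) (auto simp: descends_into_def)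
  ultimately show ?thesis
    by blast
qed

end

text \<open>
  Otherwise Koenig's lemma yields a path \<open>y\<close> none of whose vertices below level \<open>a\<close> can be
  reached from \<open>v\<close>. Its orbit is dense, so some \<open>g \<in> G\<^sub>n\<close> moves \<open>y\<close> through \<open>v\<close>; as \<open>g\<close> keeps all
  edges beyond level \<open>n\<close>, the path \<open>g y\<close> then leads from \<open>v\<close> to \<open>vertex d y\<close>.
\<close>

lemma minimal_imp_connected:
  assumes minimal: "acts_minimally V E s r v0" and v: "v \<in> V a"
  shows "\<exists>b>a. \<forall>w\<in>V b. paths a b v w \<noteq> {}"
proof (rule ccontr)
  assume none: "\<not> ?thesis"
  define U where "U d = {w. a < d \<longrightarrow> paths a d v w = {}}" for d
  have "U d \<inter> V d \<noteq> {}" for d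
    using none V_nonempty by (cases "a < d") (auto simp: U_def)
  moreover have "u \<in> U c"
    if "c < d" "u \<in> V c" "w \<in> U d" "paths c d u w \<noteq> {}" for c d u w
    using that paths_trans[of a c d v u w] by (auto simp: U_def)
  ultimately obtain y where y: "y \<in> X" "\<And>d. vertex d y \<in> U d"
    using exists_path_within[of U] by blast
  obtain x where x: "x \<in> X" "vertex a x = v"
    using exists_path_through[OF v] by blast
  let ?O = "{x\<in>X. x a \<in> {e. s (Suc a) e = v}}"
  have "x \<in> T closure_of {g y | g. g \<in> fullgroup_set V E s r v0}"
    using minimal x y unfolding acts_minimally_def by blast
  moreover have "openin T ?O"
    by (rule openin_coordinate)
  moreover have "x \<in> ?O"
    using x by (simp add: vertex_def)
  ultimately obtain z where "z \<in> {g y | g. g \<in> fullgroup_set V E s r v0}" "z \<in> ?O"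
    by (meson in_closure_of)
  then obtain g n where g: "g \<in> G n" "g y \<in> ?O"
    unfolding fullgroup_set_def by blast
  define d where "d = max n (Suc a)"
  have "segment a d (g y) \<in> paths a d (vertex a (g y)) (vertex d (g y))"
    using segment_in_paths Gn_maps_pathspace g(1) y(1) by (simp add: d_def)
  moreover have "vertex a (g y) = v" "vertex d (g y) = vertex d y"
    using g vertex_Gn y(1) by (auto simp: vertex_def d_def)
  ultimately show False
    using y(2)[of d] by (auto simp: U_def d_def)
qed

lemma eventually_connected:
  assumes "acts_minimally V E s r v0"
  shows "eventually (\<lambda>b. \<forall>v\<in>V a. \<forall>w\<in>V b. paths a b v w \<noteq> {}) sequentially"
proof (rule eventually_ball_finite[OF finite_V], intro ballI)
  fix v
  assume "v \<in> V a"
  then obtain b where "a < b" "\<forall>w\<in>V b. paths a b v w \<noteq> {}"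
    using minimal_imp_connected[OF assms] by blast
  then show "eventually (\<lambda>b. \<forall>w\<in>V b. paths a b v w \<noteq> {}) sequentially"
    using paths_to_all_propagate unfolding eventually_sequentially by (metis le_neq_implies_less)
qed

section \<open>The action on finite paths and its sign\<close>

text \<open>
  To let \<open>g \<in> G\<^sub>m\<close> act on a path \<open>q\<close> from the root to \<open>w\<close>, continue \<open>q\<close> by a fixed tail through
  \<open>w\<close>, apply \<open>g\<close>, and read off the first \<open>m\<close> edges. Since \<open>g\<close> keeps the tail and its first
  \<open>m\<close> output edges depend only on the first \<open>m\<close> input edges, the choice of the tail is irrelevant.
\<close>

definition reference_path :: "nat \<Rightarrow> 'v \<Rightarrow> nat \<Rightarrow> 'e" where
  "reference_path m w = (SOME x. x \<in> X \<and> vertex m x = w)"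

definition path_action :: "((nat \<Rightarrow> 'e) \<Rightarrow> nat \<Rightarrow> 'e) \<Rightarrow> nat \<Rightarrow> 'v \<Rightarrow> 'e list \<Rightarrow> 'e list" where
  "path_action g m w q =
     (if q \<in> paths 0 m v0 w then segment 0 m (g (graft m q (reference_path m w))) else q)"

lemma grafted_reference_path:
  assumes q: "q \<in> paths 0 m v0 w" and m: "0 < m"
  shows "graft m q (reference_path m w) \<in> X" "segment 0 m (graft m q (reference_path m w)) = q"
    "vertex m (graft m q (reference_path m w)) = w"
proof -
  have "\<exists>x. x \<in> X \<and> vertex m x = w"
    using exists_path_through paths_target_in_V[OF q m] by blast
  then have ref: "reference_path m w \<in> X" "vertex m (reference_path m w) = w"
    unfolding reference_path_def by (metis (mono_tags, lifting) someI_ex)+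
  show "graft m q (reference_path m w) \<in> X"
    using graft_in_pathspace[OF m q] tail_from_vertex[OF ref(1), of m] ref(2) by simp
  show "segment 0 m (graft m q (reference_path m w)) = q"
    using q by (simp add: segment_graft_prefix length_paths)
  show "vertex m (graft m q (reference_path m w)) = w"
    using ref(2) by (simp add: vertex_graft)
qed

lemma path_action_segment:
  assumes g: "g \<in> G m" and x: "x \<in> X" and m: "0 < m"
  shows "path_action g m (vertex m x) (segment 0 m x) = segment 0 m (g x)"
proof -
  let ?q = "segment 0 m x"
  have q: "?q \<in> paths 0 m v0 (vertex m x)"
    using segment_in_paths[OF x m] vertex_0[OF x] by simp
  then show ?thesis
    using grafted_reference_path[OF q m] segment_Gn[OF g _ x] by (simp add: path_action_def)
qed

lemma path_action_in_paths:
  assumes g: "g \<in> G m" and m: "0 < m" and q: "q \<in> paths 0 m v0 w"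
  shows "path_action g m w q \<in> paths 0 m v0 w"
proof -
  let ?x = "graft m q (reference_path m w)"
  note x = grafted_reference_path[OF q m]
  have "segment 0 m (g ?x) \<in> paths 0 m v0 (vertex m (g ?x))"
    using segment_in_paths[OF Gn_maps_pathspace[OF g x(1)] m] vertex_0 Gn_maps_pathspace[OF g x(1)]
    by simp
  then show ?thesis
    using q x vertex_Gn[OF g x(1)] by (simp add: path_action_def)
qed

lemma path_action_comp:
  assumes g: "g \<in> G m" and h: "h \<in> G m" and m: "0 < m"
  shows "path_action (g \<circ> h) m w = path_action g m w \<circ> path_action h m w"
proof
  fix q
  show "path_action (g \<circ> h) m w q = (path_action g m w \<circ> path_action h m w) q"
  proof (cases "q \<in> paths 0 m v0 w")
    case True
    let ?x = "graft m q (reference_path m w)"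
    note x = grafted_reference_path[OF True m]
    have "path_action g m w (path_action h m w q) = segment 0 m (g (h ?x))"
      using path_action_segment[OF g Gn_maps_pathspace[OF h x(1)] m] vertex_Gn[OF h x(1)] x(3) True
      by (simp add: path_action_def)
    then show ?thesis
      using True by (simp add: path_action_def)
  qed (simp add: path_action_def)
qed

lemma path_action_id: "0 < m \<Longrightarrow> path_action id m w = id"
  by (auto simp: path_action_def grafted_reference_path fun_eq_iff)

lemma path_action_permutes:
  assumes g: "g \<in> G m" and m: "0 < m"
  shows "path_action g m w permutes paths 0 m v0 w"
proof -
  let ?f = "path_action g m w" and ?P = "paths 0 m v0 w"
  have "inj_on ?f ?P"
  proof (rule inj_onI)
    fix q1 q2
    assume q: "q1 \<in> ?P" "q2 \<in> ?P" and eq: "?f q1 = ?f q2"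
    let ?x1 = "graft m q1 (reference_path m w)" and ?x2 = "graft m q2 (reference_path m w)"
    note x1 = grafted_reference_path[OF q(1) m] and x2 = grafted_reference_path[OF q(2) m]
    have "g ?x1 k = g ?x2 k" for k
    proof (cases "k < m")
      case True
      have "segment 0 m (g ?x1) = segment 0 m (g ?x2)"
        using eq q by (simp add: path_action_def)
      then show ?thesis
        using True by (simp add: segment_eq_iff)
    next
      case False
      then show ?thesis
        using Gn_beyond[OF g x1(1)] Gn_beyond[OF g x2(1)] by (simp add: graft_beyond)
    qed
    then have "g ?x1 = g ?x2"
      by (rule ext)
    then have "?x1 = ?x2"
      using inj_onD[OF Gn_inj_on[OF g]] x1(1) x2(1) by blast
    then show "q1 = q2"
      using x1(2) x2(2) by metis
  qed
  moreover have "?f ` ?P \<subseteq> ?P"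
    using path_action_in_paths[OF g m] by blast
  ultimately have "bij_betw ?f ?P ?P"
    using endo_inj_surj[OF finite_paths] by (simp add: bij_betw_def)
  then show ?thesis
    by (rule bij_imp_permutes) (simp add: path_action_def)
qed

lemma evenperm_path_action_comp:
  assumes "g \<in> G m" "h \<in> G m" "0 < m"
  shows "evenperm (path_action (g \<circ> h) m w) \<longleftrightarrow> (evenperm (path_action g m w) \<longleftrightarrow> evenperm (path_action h m w))"
proof -
  have "permutation (path_action f m w)" if "f \<in> G m" for f
    using finite_paths path_action_permutes[OF that assms(3)] by (rule permutes_imp_permutation)
  then show ?thesis
    using assms path_action_comp evenperm_comp by metis
qed

lemma eventually_evenperm_mult:
  assumes "g \<in> carrier FG" "h \<in> carrier FG"
  shows "\<forall>\<^sub>F m in sequentially. \<forall>w. evenperm (path_action (g \<circ> h) m w)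
           \<longleftrightarrow> (evenperm (path_action g m w) \<longleftrightarrow> evenperm (path_action h m w))"
  using eventually_in_Gn[OF assms(1)] eventually_in_Gn[OF assms(2)] eventually_gt_at_top[of 0]
  by eventually_elim (simp add: evenperm_path_action_comp)

definition even_subgroup :: "((nat \<Rightarrow> 'e) \<Rightarrow> nat \<Rightarrow> 'e) set" where
  "even_subgroup = {g \<in> carrier FG. \<forall>\<^sub>F m in sequentially. \<forall>w. evenperm (path_action g m w)}"

lemma square_in_even_subgroup:
  assumes "group FG" "g \<in> carrier FG"
  shows "g \<circ> g \<in> even_subgroup"
proof -
  from eventually_evenperm_mult[OF assms(2) assms(2)]
  have "\<forall>\<^sub>F m in sequentially. \<forall>w. evenperm (path_action (g \<circ> g) m w)"
    by eventually_elim simp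
  then show ?thesis
    using group.is_monoid[OF assms(1)] monoid.m_closed assms(2)
    by (fastforce simp: even_subgroup_def mult_fullgroup)
qed

lemma eventually_evenperm_inv:
  assumes grp: "group FG" and a: "a \<in> carrier FG"
  shows "\<forall>\<^sub>F m in sequentially. \<forall>w.
           evenperm (path_action (inv\<^bsub>FG\<^esub> a) m w) \<longleftrightarrow> evenperm (path_action a m w)"
proof -
  have inverse: "a \<circ> inv\<^bsub>FG\<^esub> a = id"
    using group.r_inv[OF grp a] by (simp add: mult_fullgroup one_fullgroup)
  from eventually_evenperm_mult[OF a group.inv_closed[OF grp a]] eventually_gt_at_top[of 0]
  show ?thesis
    by eventually_elim (auto simp: inverse path_action_id)
qed

lemma even_subgroup_normal:
  assumes grp: "group FG"
  shows "even_subgroup \<lhd> FG"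
proof -
  interpret FG: group FG by (rule grp)
  note inv = eventually_evenperm_inv[OF grp]
  have "subgroup even_subgroup FG"
  proof (rule FG.subgroupI)
    show "even_subgroup \<subseteq> carrier FG"
      by (auto simp: even_subgroup_def)
    have "\<forall>\<^sub>F m in sequentially. \<forall>w. evenperm (path_action id m w)"
      using eventually_gt_at_top[of 0] by eventually_elim (simp add: path_action_id)
    then have "id \<in> even_subgroup"
      using FG.one_closed by (simp add: even_subgroup_def one_fullgroup)
    then show "even_subgroup \<noteq> {}"
      by blast
  next
    fix a
    assume "a \<in> even_subgroup"
    then have a: "a \<in> carrier FG" "\<forall>\<^sub>F m in sequentially. \<forall>w. evenperm (path_action a m w)"
      by (simp_all add: even_subgroup_def)
    from inv[OF a(1)] a(2) have "\<forall>\<^sub>F m in sequentially. \<forall>w. evenperm (path_action (inv\<^bsub>FG\<^esub> a) m w)"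
      by eventually_elim simp
    then show "inv\<^bsub>FG\<^esub> a \<in> even_subgroup"
      using FG.inv_closed[OF a(1)] by (simp add: even_subgroup_def)
  next
    fix a b
    assume "a \<in> even_subgroup" "b \<in> even_subgroup"
    then have a: "a \<in> carrier FG" "\<forall>\<^sub>F m in sequentially. \<forall>w. evenperm (path_action a m w)"
      and b: "b \<in> carrier FG" "\<forall>\<^sub>F m in sequentially. \<forall>w. evenperm (path_action b m w)"
      by (simp_all add: even_subgroup_def)
    from eventually_evenperm_mult[OF a(1) b(1)] a(2) b(2)
    have "\<forall>\<^sub>F m in sequentially. \<forall>w. evenperm (path_action (a \<circ> b) m w)"
      by eventually_elim simp
    then show "a \<otimes>\<^bsub>FG\<^esub> b \<in> even_subgroup"
      using FG.m_closed[OF a(1) b(1)] by (simp add: even_subgroup_def mult_fullgroup)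
  qed
  moreover have "x \<otimes>\<^bsub>FG\<^esub> h \<otimes>\<^bsub>FG\<^esub> inv\<^bsub>FG\<^esub> x \<in> even_subgroup"
    if x: "x \<in> carrier FG" and "h \<in> even_subgroup" for x h
  proof -
    have h: "h \<in> carrier FG" "\<forall>\<^sub>F m in sequentially. \<forall>w. evenperm (path_action h m w)"
      using \<open>h \<in> even_subgroup\<close> by (simp_all add: even_subgroup_def)
    have xh: "x \<circ> h \<in> carrier FG"
      using FG.m_closed[OF x h(1)] by (simp add: mult_fullgroup)
    from eventually_evenperm_mult[OF xh FG.inv_closed[OF x]] eventually_evenperm_mult[OF x h(1)]
      inv[OF x] h(2)
    have "\<forall>\<^sub>F m in sequentially. \<forall>w. evenperm (path_action (x \<circ> h \<circ> inv\<^bsub>FG\<^esub> x) m w)"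
      by eventually_elim simp
    then show ?thesis
      using FG.m_closed[OF xh FG.inv_closed[OF x]] by (simp add: even_subgroup_def mult_fullgroup)
  qed
  ultimately show ?thesis
    by (simp add: FG.normal_inv_iff)
qed

section \<open>Prefix swaps and evenness of path counts\<close>

definition prefix_swap :: "nat \<Rightarrow> 'e list \<Rightarrow> 'e list \<Rightarrow> (nat \<Rightarrow> 'e) \<Rightarrow> nat \<Rightarrow> 'e" where
  "prefix_swap d p1 p2 x =
     (if x \<in> X \<and> segment 0 d x = p1 then graft d p2 x
      else if x \<in> X \<and> segment 0 d x = p2 then graft d p1 x else x)"

context
  fixes d u p1 p2
  assumes d: "0 < d" and p1: "p1 \<in> paths 0 d v0 u" and p2: "p2 \<in> paths 0 d v0 u" and p12: "p1 \<noteq> p2"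
begin

lemma vertex_if_segment_path: "x \<in> X \<Longrightarrow> segment 0 d x \<in> paths 0 d v0 u \<Longrightarrow> vertex d x = u"
  using segment_in_paths[of x 0 d] vertex_0 d paths_target_unique by fastforce

lemma graft_prefix_in_pathspace: "x \<in> X \<Longrightarrow> vertex d x = u \<Longrightarrow> p \<in> paths 0 d v0 u \<Longrightarrow> graft d p x \<in> X"
  using graft_in_pathspace[OF d] tail_from_vertex by blast

lemma prefix_swap_in_pathspace: "x \<in> X \<Longrightarrow> prefix_swap d p1 p2 x \<in> X"
  using vertex_if_segment_path graft_prefix_in_pathspace p1 p2 by (auto simp: prefix_swap_def)

lemma prefix_swap_involution: "prefix_swap d p1 p2 (prefix_swap d p1 p2 x) = x"
proof (cases "x \<in> X \<and> (segment 0 d x = p1 \<or> segment 0 d x = p2)")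
  case True
  then have x: "x \<in> X" "vertex d x = u"
    using vertex_if_segment_path p1 p2 by blast+
  have len: "length p1 = d" "length p2 = d"
    using p1 p2 by (simp_all add: length_paths)
  show ?thesis
    using True p12 graft_prefix_in_pathspace[OF x] p1 p2
    by (auto simp: prefix_swap_def segment_graft_prefix len graft_graft graft_segment)
next
  case False
  then show ?thesis
    by (auto simp: prefix_swap_def)
qed

lemma prefix_swap_in_Gn: "prefix_swap d p1 p2 \<in> G d"
proof (rule involution_in_Gn)
  show "prefix_swap d p1 p2 x \<in> X" if "x \<in> X" for x
    using that by (rule prefix_swap_in_pathspace)
  show "prefix_swap d p1 p2 (prefix_swap d p1 p2 x) = x" for x
    by (rule prefix_swap_involution)
  show "prefix_swap d p1 p2 x = x" if "x \<notin> X" for x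
    using that by (simp add: prefix_swap_def)
  show "prefix_swap d p1 p2 x k = x k" if "x \<in> X" "d \<le> k" for x k
    using that by (simp add: prefix_swap_def graft_beyond)
next
  fix x y k
  assume "x \<in> X" "y \<in> X" "\<forall>j<d. x j = y j" "k < d"
  moreover from this have "segment 0 d x = segment 0 d y"
    by (simp add: segment_eq_iff)
  ultimately show "prefix_swap d p1 p2 x k = prefix_swap d p1 p2 y k"
    by (simp add: prefix_swap_def graft_def)
qed

lemma prefix_split_iff:
  assumes "d < m" "q \<in> paths 0 m v0 w" "p \<in> paths 0 d v0 u"
  shows "(\<exists>t\<in>paths d m u w. q = p @ t) \<longleftrightarrow> take d q = p"
proof
  assume "take d q = p"
  moreover have "take d q \<in> paths 0 d v0 (r d (q ! (d - 1)))" "drop d q \<in> paths d m (r d (q ! (d - 1))) w"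
    using paths_split[OF \<open>0 < d\<close> assms(1,2)] by simp_all
  ultimately show "\<exists>t\<in>paths d m u w. q = p @ t"
    using paths_target_unique assms(3) by (metis append_take_drop_id)
qed (use assms(3) length_paths in auto)

lemma path_action_prefix_swap:
  assumes dm: "d < m"
  shows "path_action (prefix_swap d p1 p2) m w = swap_prefixes p1 p2 (paths d m u w)"
proof
  fix q
  have len: "length p1 = d" "length p2 = d"
    using p1 p2 by (simp_all add: length_paths)
  show "path_action (prefix_swap d p1 p2) m w q = swap_prefixes p1 p2 (paths d m u w) q"
  proof (cases "q \<in> paths 0 m v0 w")
    case True
    let ?x = "graft m q (reference_path m w)"
    note x = grafted_reference_path[OF True less_trans[OF d dm]]
    have "path_action (prefix_swap d p1 p2) m w q = segment 0 m (prefix_swap d p1 p2 ?x)"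
      using True by (simp add: path_action_def)
    moreover have "segment 0 d ?x = take d q"
      using segment_take[of d m ?x] dm x(2) by simp
    moreover have "segment 0 m (graft d p ?x) = p @ drop d q" if "length p = d" for p
      using segment_graft[OF that] dm x(2) by simp
    ultimately show ?thesis
      using prefix_split_iff[OF dm True p1] prefix_split_iff[OF dm True p2] x(1,2) len p12
      by (auto simp: prefix_swap_def swap_prefixes_def)
  next
    case False
    then show ?thesis
      using paths_append[OF d dm p1] paths_append[OF d dm p2]
      by (auto simp: path_action_def swap_prefixes_def)
  qed
qed

lemma evenperm_path_action_prefix_swap:
  "d < m \<Longrightarrow> evenperm (path_action (prefix_swap d p1 p2) m w) \<longleftrightarrow> even (card (paths d m u w))"
  using evenperm_swap_prefixes[OF finite_paths _ p12] p1 p2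
  by (simp add: path_action_prefix_swap length_paths)

end

lemma two_paths_if_nontrivial:
  assumes "g \<in> carrier FG" "g \<noteq> id"
  obtains n z p1 p2 where "0 < n" "p1 \<in> paths 0 n v0 z" "p2 \<in> paths 0 n v0 z" "p1 \<noteq> p2"
proof -
  obtain n where g: "g \<in> G n"
    using assms(1) by (auto simp: carrier_fullgroup)
  obtain x k where "g x k \<noteq> x k"
    using assms(2) by (metis eq_id_iff ext)
  moreover from this have x: "x \<in> X"
    using Gn_outside[OF g] by metis
  ultimately have "k < n"
    using Gn_beyond[OF g x] not_less by blast
  then have n: "0 < n" and "segment 0 n (g x) \<noteq> segment 0 n x"
    using \<open>g x k \<noteq> x k\<close> by (auto simp: segment_eq_iff)
  moreover have "segment 0 n (g x) \<in> paths 0 n v0 (vertex n x)"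
    using segment_in_paths[OF Gn_maps_pathspace[OF g x] n] vertex_0[OF Gn_maps_pathspace[OF g x]]
      vertex_Gn[OF g x order.refl] by simp
  moreover have "segment 0 n x \<in> paths 0 n v0 (vertex n x)"
    using segment_in_paths[OF x n] vertex_0[OF x] by simp
  ultimately show ?thesis
    using that by blast
qed

lemma eventually_even_paths_if_all_even:
  assumes minimal: "acts_minimally V E s r v0" and all_even: "carrier FG \<subseteq> even_subgroup"
    and n: "0 < n" and p1: "p1 \<in> paths 0 n v0 z" and p2: "p2 \<in> paths 0 n v0 z" and p12: "p1 \<noteq> p2"
  shows "\<forall>\<^sub>F b in sequentially. \<forall>v\<in>V a. \<forall>w\<in>V b. even (card (paths a b v w))"
proof -
  have "z \<in> V n"
    using paths_target_in_V[OF p1 n] .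
  then obtain d where d: "max a n < d" "\<forall>w\<in>V d. paths n d z w \<noteq> {}"
    using eventually_happens'[OF _ eventually_conj[OF eventually_gt_at_top eventually_connected[OF minimal]]]
    by fastforce
  have "\<forall>\<^sub>F b in sequentially. \<forall>w\<in>V b. even (card (paths d b u w))" if u: "u \<in> V d" for u
  proof -
    obtain q where q: "q \<in> paths n d z u"
      using d u by blast
    have nd: "n < d"
      using d(1) by simp
    let ?swap = "prefix_swap d (p1 @ q) (p2 @ q)"
    have P: "p1 @ q \<in> paths 0 d v0 u" "p2 @ q \<in> paths 0 d v0 u" "p1 @ q \<noteq> p2 @ q"
      using paths_append[OF n nd p1 q] paths_append[OF n nd p2 q] p12 by auto
    have "?swap \<in> even_subgroup"
      using prefix_swap_in_Gn[OF _ P] all_even nd by (auto simp: carrier_fullgroup)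
    then have "\<forall>\<^sub>F b in sequentially. \<forall>w. evenperm (path_action ?swap b w)"
      by (simp add: even_subgroup_def)
    with eventually_gt_at_top[of d] show ?thesis
      by eventually_elim (use evenperm_path_action_prefix_swap[OF _ P] nd in auto)
  qed
  then have "\<forall>\<^sub>F b in sequentially. \<forall>u\<in>V d. \<forall>w\<in>V b. even (card (paths d b u w))"
    by (intro eventually_ball_finite finite_V) blast
  with eventually_gt_at_top[of d] show ?thesis
    by eventually_elim (use even_paths_restrict d(1) in auto)
qed

lemma eventually_even_paths:
  assumes cantor: "is_cantor_space T" and minimal: "acts_minimally V E s r v0"
    and simple: "simple_nontrivial_group FG"
  shows "\<forall>\<^sub>F b in sequentially. \<forall>v\<in>V a. \<forall>w\<in>V b. even (card (paths a b v w))"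
proof -
  have grp: "group FG" and nontrivial: "carrier FG \<noteq> {id}"
    and normal_trivial: "\<And>N. N \<lhd> FG \<Longrightarrow> N = {id} \<or> N = carrier FG"
    using simple by (auto simp: simple_nontrivial_group_def one_fullgroup)
  obtain g where g: "g \<in> carrier FG" "g \<noteq> id"
    using nontrivial group.is_monoid[OF grp] monoid.one_closed one_fullgroup by fastforce
  have "even_subgroup \<noteq> {id}"
  proof
    assume "even_subgroup = {id}"
    then have "carrier FG = {id, g}"
      using group.simple_of_exponent_two_carrier[OF grp] normal_trivial g square_in_even_subgroup[OF grp]
      by (simp add: one_fullgroup mult_fullgroup)
    then have "finite X"
      using finite_pathspace_if_minimal_finite_group[OF minimal] by (simp add: fullgroup_def)
    then show False
      using infinite_pathspace_if_cantor[OF cantor] by simp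
  qed
  then have "carrier FG \<subseteq> even_subgroup"
    using normal_trivial[OF even_subgroup_normal[OF grp]] by simp
  moreover obtain n z p1 p2 where "0 < n" "p1 \<in> paths 0 n v0 z" "p2 \<in> paths 0 n v0 z" "p1 \<noteq> p2"
    using two_paths_if_nontrivial[OF g] .
  ultimately show ?thesis
    by (rule eventually_even_paths_if_all_even[OF minimal])
qed

end

theorem mainTheorem4:
  fixes V :: "nat \<Rightarrow> 'v set" and E :: "nat \<Rightarrow> 'e set"
    and s r :: "nat \<Rightarrow> 'e \<Rightarrow> 'v" and v0 :: 'v
  assumes "bratteli V E s r v0"
    and "is_cantor_space (pathtop V E s r v0)"
    and "acts_minimally V E s r v0"
    and "simple_nontrivial_group (fullgroup V E s r v0)"
  shows "\<exists>m :: nat \<Rightarrow> nat. m 0 = 0 \<and> strict_mono m \<and>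
           (\<forall>n. \<forall>v\<in>V (m n). \<forall>w\<in>V (m (Suc n)).
               even (card (fin_paths V E s r (m n) (m (Suc n)) v w)) \<and>
               card (fin_paths V E s r (m n) (m (Suc n)) v w) \<ge> 2)"
proof -
  interpret bratteli_diagram V E s r v0
    by unfold_locales (rule assms(1))
  have "\<forall>\<^sub>F b in sequentially. \<forall>v\<in>V a. \<forall>w\<in>V b.
      even (card (paths a b v w)) \<and> card (paths a b v w) \<ge> 2" for a
  proof -
    have two: "2 \<le> card S" if "even (card S)" "S \<noteq> {}" "finite S" for S :: "'e list set"
    proof -
      have "card S \<noteq> 0"
        using that(2,3) by simp
      with that(1) show ?thesis
        by presburger
    qed
    from eventually_connected[OF assms(3), of a] eventually_even_paths[OF assms(2-4), of a]
    show ?thesis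
      by eventually_elim (use two finite_paths in blast)
  qed
  then show ?thesis
    by (rule telescope_exists)
qed

end
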